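(* Let $N\ge4$ and $C_N=\frac{N(N-4)}{4}$. Then for every complex-valued $u\in C_0^\infty(\mathbb{R}^N\setminus\{0\})$, $$\begin{aligned}\int_{\mathbb{R}^N}|\Delta u|^2dx&=C_N^2\int_{\mathbb{R}^N}\frac{|u|^2}{|x|^4}dx+\int_{\mathbb{R}^N}\left|\Delta u+\frac{C_N}{|x|^2}u\right|^2dx\\&\quad+2C_N\int_{\mathbb{R}^N}\frac{1}{|x|^2}\left|\nabla|u|+\frac{N-4}{2}|u|\frac{x}{|x|^2}\right|^2dx+2C_N\int_{\mathbb{R}^N}\frac{|\nabla u|^2-|\nabla|u||^2}{|x|^2}dx.\end{aligned}$$
   Context: $\Delta$ is the Euclidean Laplacian, $\nabla$ the Euclidean gradient, $|\cdot|$ the Euclidean norm (for complex vectors $|\nabla u|^2=\sum_j|\partial_ju|^2$). *)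

theory Defs
  imports "HOL-Analysis.Analysis"
begin

definition pderiv_at :: "(real^'n \<Rightarrow> 'b::real_normed_vector) \<Rightarrow> 'n \<Rightarrow> real^'n \<Rightarrow> 'b" where
  "pderiv_at f i x = frechet_derivative f (at x) (axis i 1)"

fun Ck :: "nat \<Rightarrow> (real^'n \<Rightarrow> 'b::real_normed_vector) \<Rightarrow> bool" where
  "Ck 0 f = continuous_on UNIV f"
| "Ck (Suc k) f = (f differentiable_on UNIV \<and> continuous_on UNIV f
                   \<and> (\<forall>i. Ck k (pderiv_at f i)))"

definition smooth :: "(real^'n \<Rightarrow> 'b::real_normed_vector) \<Rightarrow> bool" where
  "smooth f = (\<forall>k. Ck k f)"

definition test_fun_punct :: "(real^'n \<Rightarrow> complex) \<Rightarrow> bool" where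
  "test_fun_punct u = (smooth u \<and> compact (closure {x. u x \<noteq> 0})
                       \<and> 0 \<notin> closure {x. u x \<noteq> 0})"

definition laplacian :: "(real^'n \<Rightarrow> complex) \<Rightarrow> real^'n \<Rightarrow> complex" where
  "laplacian u x = (\<Sum>i\<in>UNIV. pderiv_at (pderiv_at u i) i x)"

definition grad_sq :: "(real^'n \<Rightarrow> complex) \<Rightarrow> real^'n \<Rightarrow> real" where
  "grad_sq u x = (\<Sum>i\<in>UNIV. (cmod (pderiv_at u i x))^2)"

text \<open>Gradient of the (Lipschitz, possibly non-smooth) function |u|: the classical gradient
  where |u| is differentiable, 0 elsewhere (this agrees a.e. with the weak gradient).\<close>
definition grad_abs :: "(real^'n \<Rightarrow> complex) \<Rightarrow> real^'n \<Rightarrow> real^'n" where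
  "grad_abs u x = (if (\<lambda>y. cmod (u y)) differentiable (at x)
                   then (\<chi> i. pderiv_at (\<lambda>y. cmod (u y)) i x) else 0)"

end

theory Submission
  imports Defs
begin

text \<open>
  With \<open>k = (N - 2) / 2\<close> consider the vector field
  \<open>V = Re (conj u \<nabla>u) / |x|\<^sup>2 + k |u|\<^sup>2 x / |x|\<^sup>4\<close>, which is smooth on the support of \<open>u\<close>
  because that support avoids the origin. Expanding the squares on the right-hand side and using
  \<open>|u| \<nabla>|u| = Re (conj u \<nabla>u)\<close> shows that, pointwise, the right-hand side equals
  \<open>|\<Delta>u|\<^sup>2 + 2 C div V\<close>; the coefficients of \<open>|u|\<^sup>2 / |x|\<^sup>4\<close> agree because
  \<open>C + (N - 4)\<^sup>2 / 4 = k (N - 4)\<close>. The divergence of a compactly supported \<open>C\<^sup>1\<close> field has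
  integral zero: each \<open>\<partial>\<^sub>i V\<^sub>i\<close> is the limit of difference quotients of \<open>V\<^sub>i\<close>, whose integrals
  vanish by translation invariance of Lebesgue measure, and dominated convergence applies.
\<close>

lemma has_bochner_integral_lborel_translate:
  fixes f :: "'a::euclidean_space \<Rightarrow> 'b::{banach, second_countable_topology}"
  assumes "has_bochner_integral lborel f I"
  shows "has_bochner_integral lborel (\<lambda>x. f (x + c)) I"
proof -
  have [measurable]: "f \<in> borel_measurable borel"
    using assms borel_measurable_has_bochner_integral by simp
  have "has_bochner_integral (distr lborel borel ((+) c)) f I"
    using assms by (simp add: lborel_distr_plus)
  then show ?thesis
    by (simp add: has_bochner_integral_iff integrable_distr_eq integral_distr add.commute)
qed

lemma integral_difference_quotient_eq_0:
  fixes W :: "'a::euclidean_space \<Rightarrow> real"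
  assumes "integrable lborel W"
  shows "(LINT x|lborel. (W (x + c) - W x) / h) = 0"
proof -
  have "has_bochner_integral lborel (\<lambda>x. (W (x + c) - W x) / h)
      ((integral\<^sup>L lborel W - integral\<^sup>L lborel W) / h)"
    using assms
    by (intro has_bochner_integral_divide_zero has_bochner_integral_diff
        has_bochner_integral_lborel_translate) (auto simp: has_bochner_integral_iff)
  then show ?thesis
    by (simp add: has_bochner_integral_iff)
qed

lemma has_real_derivative_along_line:
  fixes W :: "'a::real_normed_vector \<Rightarrow> real"
  assumes "\<And>y. ((\<lambda>t. W (y + t *\<^sub>R v)) has_real_derivative d y) (at 0)"
  shows "((\<lambda>t. W (x + t *\<^sub>R v)) has_real_derivative d (x + s *\<^sub>R v)) (at s)"
proof -
  have "((\<lambda>t. W ((x + s *\<^sub>R v) + t *\<^sub>R v)) has_real_derivative d (x + s *\<^sub>R v)) (at 0)"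
    by (rule assms)
  then have "((\<lambda>t. W (x + (t + s) *\<^sub>R v)) has_real_derivative d (x + s *\<^sub>R v)) (at 0)"
    by (simp add: algebra_simps)
  then show ?thesis
    using DERIV_shift[of "\<lambda>t. W (x + t *\<^sub>R v)" _ 0 s] by simp
qed

lemma difference_along_line_le:
  fixes W :: "'a::real_normed_vector \<Rightarrow> real"
  assumes "\<And>y. ((\<lambda>t. W (y + t *\<^sub>R v)) has_real_derivative d y) (at 0)"
    and "\<And>y. \<bar>d y\<bar> \<le> B" and "h > 0"
  shows "\<bar>W (x + h *\<^sub>R v) - W x\<bar> \<le> B * h"
proof -
  obtain z where "W (x + h *\<^sub>R v) - W (x + 0 *\<^sub>R v) = (h - 0) * d (x + z *\<^sub>R v)"
    using MVT2[OF \<open>h > 0\<close>, of "\<lambda>t. W (x + t *\<^sub>R v)" "\<lambda>t. d (x + t *\<^sub>R v)"]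
      has_real_derivative_along_line[OF assms(1)] by blast
  then show ?thesis
    using assms(2)[of "x + z *\<^sub>R v"] \<open>h > 0\<close> by (simp add: abs_mult)
qed

lemma difference_quotient_le_indicator:
  fixes W :: "'a::real_normed_vector \<Rightarrow> real"
  assumes "\<And>y. ((\<lambda>t. W (y + t *\<^sub>R v)) has_real_derivative d y) (at 0)"
    and "\<And>y. \<bar>d y\<bar> \<le> B" and R: "\<And>y. W y \<noteq> 0 \<Longrightarrow> norm y \<le> R" and h: "0 < h" "h \<le> 1"
  shows "\<bar>(W (x + h *\<^sub>R v) - W x) / h\<bar> \<le> B * indicator (cball 0 (R + norm v)) x"
proof (cases "x \<in> cball 0 (R + norm v)")
  case True
  then show ?thesis
    using difference_along_line_le[OF assms(1,2) h(1)] h(1) by (simp add: divide_le_eq)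
next
  case False
  have "norm (h *\<^sub>R v) \<le> norm v"
    using h by (simp add: mult_left_le_one_le)
  then have "W (x + h *\<^sub>R v) = 0"
    using False R[of "x + h *\<^sub>R v"] norm_triangle_ineq4[of "x + h *\<^sub>R v" "h *\<^sub>R v"] by force
  moreover have "W x = 0"
    using False R[of x] norm_ge_zero[of v] by force
  ultimately show ?thesis
    using False by simp
qed

lemma integral_directional_derivative_eq_0:
  fixes W d :: "'a::euclidean_space \<Rightarrow> real"
  assumes deriv: "\<And>x. ((\<lambda>t. W (x + t *\<^sub>R v)) has_real_derivative d x) (at 0)"
    and W: "integrable lborel W" and S: "bounded S" "\<And>x. x \<notin> S \<Longrightarrow> W x = 0"
    and d: "d \<in> borel_measurable borel" "bounded (range d)"
  shows "(LINT x|lborel. d x) = 0"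
proof -
  obtain B where B: "\<And>x. \<bar>d x\<bar> \<le> B"
    using d(2) by (auto simp: bounded_iff)
  obtain R where R: "\<And>x. W x \<noteq> 0 \<Longrightarrow> norm x \<le> R"
    using S bounded_pos by metis
  define h :: "nat \<Rightarrow> real" where "h n = inverse (Suc n)" for n
  define q where "q n x = (W (x + h n *\<^sub>R v) - W x) / h n" for n x
  have h: "0 < h n" "h n \<le> 1" for n
    by (simp_all add: h_def inverse_le_1_iff)
  let ?w = "\<lambda>x. B * indicator (cball 0 (R + norm v)) x :: real"
  have "(\<lambda>n. q n x) \<longlonglongrightarrow> d x" for x
  proof -
    have "((\<lambda>t. (W (x + t *\<^sub>R v) - W x) / t) \<longlongrightarrow> d x) (at 0)"
      using deriv[of x] by (simp add: has_field_derivative_iff)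
    moreover have "filterlim h (at 0) sequentially"
      using h(1) LIMSEQ_inverse_real_of_nat unfolding h_def
      by (auto simp: filterlim_at less_imp_neq[symmetric] intro!: always_eventually)
    ultimately show ?thesis
      unfolding q_def by (rule filterlim_compose)
  qed
  then have "(\<lambda>n. LINT x|lborel. q n x) \<longlonglongrightarrow> (LINT x|lborel. d x)"
  proof (intro integral_dominated_convergence[where w="?w"] AE_I2)
    have [measurable]: "W \<in> borel_measurable borel"
      using W by simp
    show "q n \<in> borel_measurable lborel" for n
      unfolding q_def by measurable
    show "integrable lborel ?w"
      using emeasure_bounded_finite[of "cball 0 (R + norm v)"]
      by (intro integrable_mult_right integrable_real_indicator) auto
    show "norm (q n x) \<le> ?w x" for n x
      unfolding q_def real_norm_def using deriv B R h by (rule difference_quotient_le_indicator)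
  qed (use d(1) in auto)
  moreover have "(LINT x|lborel. q n x) = 0" for n
    unfolding q_def using W by (rule integral_difference_quotient_eq_0)
  ultimately have "(\<lambda>n. 0) \<longlonglongrightarrow> (LINT x|lborel. d x)"
    by simp
  then show ?thesis
    by (metis LIMSEQ_unique tendsto_const)
qed

lemma integrable_vanishing_outside_compact:
  fixes f :: "'a::euclidean_space \<Rightarrow> 'b::{banach, second_countable_topology}"
  assumes "compact K" "continuous_on K f" "\<And>x. x \<notin> K \<Longrightarrow> f x = 0"
  shows "integrable lborel f"
proof -
  have "f = (\<lambda>x. indicator K x *\<^sub>R f x)"
    using assms(3) by (auto simp: fun_eq_iff indicator_def)
  then show ?thesis
    using borel_integrable_compact[OF assms(1,2)] by simp
qed

lemma integrable_dominated_on_compact: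
  fixes f g :: "'a::euclidean_space \<Rightarrow> real"
  assumes "f \<in> borel_measurable borel" "compact K" "continuous_on K g"
    and "\<And>x. x \<notin> K \<Longrightarrow> f x = 0" "\<And>x. x \<in> K \<Longrightarrow> \<bar>f x\<bar> \<le> g x"
  shows "integrable lborel f"
proof (rule Bochner_Integration.integrable_bound)
  show "integrable lborel (\<lambda>x. indicator K x *\<^sub>R g x)"
    using borel_integrable_compact[OF assms(2,3)] .
  show "AE x in lborel. norm (f x) \<le> norm (indicator K x *\<^sub>R g x)"
  proof (intro AE_I2)
    fix x
    show "norm (f x) \<le> norm (indicator K x *\<^sub>R g x)"
      using assms(4,5)[of x] by (cases "x \<in> K") auto
  qed
qed (use assms(1) in simp)

lemma bounded_range_vanishing_outside:
  assumes "compact K" "continuous_on K f" "\<And>x. x \<notin> K \<Longrightarrow> f x = 0"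
  shows "bounded (range f)"
proof -
  have "range f \<subseteq> insert 0 (f ` K)"
    using assms(3) by blast
  moreover have "bounded (insert 0 (f ` K))"
    using compact_imp_bounded[OF compact_continuous_image[OF assms(2,1)]] by simp
  ultimately show ?thesis
    using bounded_subset by blast
qed

lemma integral_eq_of_pointwise_eq:
  fixes f g f1 f2 f3 f4 :: "'a \<Rightarrow> real"
  assumes eq: "\<And>x. f x + g x = a * f1 x + f2 x + b * f3 x + b * f4 x"
    and "integrable M f" "integrable M g" "integrable M f1" "integrable M f2"
      "integrable M f3" "integrable M f4"
    and "integral\<^sup>L M g = 0"
  shows "integral\<^sup>L M f
    = a * integral\<^sup>L M f1 + integral\<^sup>L M f2 + b * integral\<^sup>L M f3 + b * integral\<^sup>L M f4"
proof -
  have "integral\<^sup>L M f = (LINT x|M. f x + g x)"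
    using assms(2,3,8) by simp
  also have "\<dots> = (LINT x|M. a * f1 x + f2 x + b * f3 x + b * f4 x)"
    by (simp only: eq)
  also have "\<dots> = a * integral\<^sup>L M f1 + integral\<^sup>L M f2 + b * integral\<^sup>L M f3 + b * integral\<^sup>L M f4"
    using assms(4-7) by simp
  finally show ?thesis .
qed

lemma has_derivative_vanishing_on_open:
  assumes "open S" "x \<in> S" "\<And>y. y \<in> S \<Longrightarrow> f y = 0"
  shows "(f has_derivative (\<lambda>_. 0)) (at x)"
proof -
  have "((\<lambda>_. 0) has_derivative (\<lambda>_. 0)) (at x)"
    by simp
  then show ?thesis
    by (rule has_derivative_transform_within_open[OF _ assms(1,2)]) (simp add: assms(3))
qed

lemma pderiv_at_eq_0_on_open:
  fixes f :: "real^'n \<Rightarrow> 'b::real_normed_vector"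
  assumes "open S" "x \<in> S" "\<And>y. y \<in> S \<Longrightarrow> f y = 0"
  shows "pderiv_at f i x = 0"
  using frechet_derivative_at[OF has_derivative_vanishing_on_open[OF assms], symmetric]
  by (simp add: pderiv_at_def)

lemma has_derivative_pderiv_at:
  assumes "f differentiable at x"
  obtains D where "(f has_derivative D) (at x)" "D (axis i 1) = pderiv_at f i x"
  using assms frechet_derivative_works pderiv_at_def by metis

lemma has_vector_derivative_along_line:
  assumes "(f has_derivative D) (at x)"
  shows "((\<lambda>t. f (x + t *\<^sub>R v)) has_vector_derivative D v) (at 0)"
proof -
  have line: "((\<lambda>t. x + t *\<^sub>R v) has_derivative (\<lambda>t. t *\<^sub>R v)) (at 0)"
    by (auto intro!: derivative_eq_intros)
  have "((\<lambda>t. f (x + t *\<^sub>R v)) has_derivative (\<lambda>t. D (t *\<^sub>R v))) (at 0)"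
    using has_derivative_compose[OF line] assms by simp
  then show ?thesis
    using assms by (simp add: has_vector_derivative_def linear_scale has_derivative_linear)
qed

lemma norm_add_power2:
  fixes a b :: "'a::real_inner"
  shows "(norm (a + b))^2 = (norm a)^2 + 2 * inner a b + (norm b)^2"
  using dot_norm[of a b] by simp

lemma power2_norm_vec: "(norm x)^2 = (\<Sum>i\<in>UNIV. (x$i)^2)"
  by (simp add: norm_vec_def L2_set_def sum_nonneg)

text \<open>On \<^typ>\<open>complex\<close>, \<open>inner z w = Re (cnj z * w)\<close>, so this is \<open>Re (conj u \<nabla>u)\<close>.\<close>

definition re_conj_grad :: "(real^'n \<Rightarrow> complex) \<Rightarrow> real^'n \<Rightarrow> real^'n" where
  "re_conj_grad u x = (\<chi> j. inner (u x) (pderiv_at u j x))"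

text \<open>At a zero of \<open>u\<close> both sides vanish: \<open>|u|\<close> has a minimum there, and \<open>1 / 0 = 0\<close>.\<close>

lemma grad_abs_eq:
  fixes u :: "real^'n \<Rightarrow> complex"
  assumes "u differentiable at x"
  shows "grad_abs u x = (1 / cmod (u x)) *\<^sub>R re_conj_grad u x"
proof (cases "u x = 0")
  case True
  have "grad_abs u x = 0"
  proof (cases "(\<lambda>y. cmod (u y)) differentiable (at x)")
    case differentiable: True
    then have "((\<lambda>y. cmod (u y)) has_derivative frechet_derivative (\<lambda>y. cmod (u y)) (at x)) (at x)"
      using frechet_derivative_works by blast
    then have "frechet_derivative (\<lambda>y. cmod (u y)) (at x) = (\<lambda>v. 0)"
      using differential_zero_maxmin[of x UNIV] True by force
    then show ?thesis
      using differentiable by (simp add: grad_abs_def pderiv_at_def vec_eq_iff)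
  qed (simp add: grad_abs_def)
  then show ?thesis
    using True by simp
next
  case False
  obtain D where D: "(u has_derivative D) (at x)"
    using assms by (auto simp: differentiable_def)
  have "((\<lambda>y. cmod (u y)) has_derivative (\<lambda>h. inner (D h) (sgn (u x)))) (at x)"
    using has_derivative_compose[OF D has_derivative_norm[OF False]] by simp
  then have "(\<lambda>y. cmod (u y)) differentiable (at x)"
    and "frechet_derivative (\<lambda>y. cmod (u y)) (at x) = (\<lambda>h. inner (D h) (sgn (u x)))"
    using differentiableI frechet_derivative_at by metis+
  moreover have "frechet_derivative u (at x) = D"
    using D frechet_derivative_at by metis
  ultimately show ?thesis
    using False by (simp add: grad_abs_def re_conj_grad_def vec_eq_iff pderiv_at_def sgn_div_norm
        inner_commute field_simps)
qed

lemma cmod_scaleR_grad_abs: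
  fixes u :: "real^'n \<Rightarrow> complex"
  assumes "u differentiable at x"
  shows "cmod (u x) *\<^sub>R grad_abs u x = re_conj_grad u x"
  by (cases "u x = 0") (simp_all add: grad_abs_eq[OF assms] re_conj_grad_def vec_eq_iff)

lemma norm_grad_abs_le:
  fixes u :: "real^'n \<Rightarrow> complex"
  assumes "u differentiable at x"
  shows "(norm (grad_abs u x))^2 \<le> grad_sq u x"
proof -
  have "(inner (u x) (pderiv_at u j x) / cmod (u x))^2 \<le> (cmod (pderiv_at u j x))^2" for j
  proof -
    have "\<bar>inner (u x) (pderiv_at u j x)\<bar> \<le> cmod (u x) * cmod (pderiv_at u j x)"
      by (rule Cauchy_Schwarz_ineq2)
    then have "\<bar>inner (u x) (pderiv_at u j x) / cmod (u x)\<bar> \<le> cmod (pderiv_at u j x)"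
      by (cases "u x = 0") (simp_all add: divide_le_eq mult.commute)
    then show ?thesis
      using abs_le_square_iff by fastforce
  qed
  then show ?thesis
    unfolding power2_norm_vec grad_sq_def
    by (simp add: grad_abs_eq[OF assms] re_conj_grad_def sum_mono divide_inverse mult.commute)
qed

definition rellich_field :: "real \<Rightarrow> (real^'n \<Rightarrow> complex) \<Rightarrow> real^'n \<Rightarrow> real^'n" where
  "rellich_field k u y
    = (1 / (norm y)^2) *\<^sub>R re_conj_grad u y + (k * (cmod (u y))^2 / (norm y)^4) *\<^sub>R y"

definition rellich_field_partial :: "real \<Rightarrow> (real^'n \<Rightarrow> complex) \<Rightarrow> 'n \<Rightarrow> real^'n \<Rightarrow> real" where
  "rellich_field_partial k u i x =
     ((cmod (pderiv_at u i x))^2 + inner (u x) (pderiv_at (pderiv_at u i) i x)) / (norm x)^2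
     - 2 * inner (u x) (pderiv_at u i x) * x$i / (norm x)^4
     + k * (2 * inner (u x) (pderiv_at u i x) * x$i / (norm x)^4 + (cmod (u x))^2 / (norm x)^4
            - 4 * (cmod (u x))^2 * (x$i)^2 / (norm x)^6)"

lemma rellich_field_component_has_derivative:
  fixes u :: "real^'n \<Rightarrow> complex"
  assumes x: "x \<noteq> 0" and du: "u differentiable at x" and dp: "pderiv_at u i differentiable at x"
  shows "((\<lambda>t. rellich_field k u (x + t *\<^sub>R axis i 1) $ i)
    has_real_derivative rellich_field_partial k u i x) (at 0)"
proof -
  obtain Du where Du: "(u has_derivative Du) (at x)" "Du (axis i 1) = pderiv_at u i x"
    using has_derivative_pderiv_at[OF du] by blast
  obtain Dp where Dp: "(pderiv_at u i has_derivative Dp) (at x)"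
      "Dp (axis i 1) = pderiv_at (pderiv_at u i) i x"
    using has_derivative_pderiv_at[OF dp] by blast
  have nth: "((\<lambda>y::real^'n. y $ i) has_derivative (\<lambda>h. h $ i)) (at x)"
    by (rule bounded_linear_imp_has_derivative[OF bounded_linear_vec_nth])
  have field_eq: "(\<lambda>y. rellich_field k u y $ i)
    = (\<lambda>y. inner (u y) (pderiv_at u i y) / inner y y + k * inner (u y) (u y) * y$i / (inner y y)^2)"
    by (simp add: fun_eq_iff rellich_field_def re_conj_grad_def dot_square_norm flip: power_mult)
  have "\<exists>D. ((\<lambda>y. rellich_field k u y $ i) has_derivative D) (at x)
      \<and> D (axis i 1) = rellich_field_partial k u i x"
    unfolding field_eq
    apply (intro exI conjI)
     apply (rule derivative_eq_intros Du(1) Dp(1) nth refl | simp add: x)+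
    apply (simp add: Du(2) Dp(2) rellich_field_partial_def dot_square_norm inner_commute inner_axis x)
    apply (simp add: field_simps x)
    apply algebra
    done
  then obtain D where "((\<lambda>y. rellich_field k u y $ i) has_derivative D) (at x)"
    and "D (axis i 1) = rellich_field_partial k u i x"
    by blast
  then show ?thesis
    using has_vector_derivative_along_line[of _ D x "axis i 1"]
    by (simp add: has_real_derivative_iff_has_vector_derivative)
qed

lemma sum_rellich_field_partial:
  fixes u :: "real^'n \<Rightarrow> complex"
  assumes "x \<noteq> 0"
  shows "(\<Sum>i\<in>UNIV. rellich_field_partial k u i x)
    = (grad_sq u x + inner (u x) (laplacian u x)) / (norm x)^2
      + (2 * k - 2) * inner (re_conj_grad u x) x / (norm x)^4
      + k * (real CARD('n) - 4) * (cmod (u x))^2 / (norm x)^4" (is "_ = ?rhs")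
proof -
  have "rellich_field_partial k u i x
      = ((cmod (pderiv_at u i x))^2 + inner (u x) (pderiv_at (pderiv_at u i) i x)) / (norm x)^2
        + (2 * k - 2) / (norm x)^4 * (inner (u x) (pderiv_at u i x) * x$i)
        + k * (cmod (u x))^2 / (norm x)^4
        - 4 * k * (cmod (u x))^2 / (norm x)^6 * (x$i)^2" for i
    unfolding rellich_field_partial_def using assms by (simp add: field_simps)
  then have "(\<Sum>i\<in>UNIV. rellich_field_partial k u i x)
      = (\<Sum>i\<in>UNIV. (cmod (pderiv_at u i x))^2 + inner (u x) (pderiv_at (pderiv_at u i) i x))
          / (norm x)^2
        + (2 * k - 2) / (norm x)^4 * (\<Sum>i\<in>UNIV. inner (u x) (pderiv_at u i x) * x$i)
        + real CARD('n) * (k * (cmod (u x))^2 / (norm x)^4)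
        - 4 * k * (cmod (u x))^2 / (norm x)^6 * (\<Sum>i\<in>UNIV. (x$i)^2)"
    by (simp add: sum.distrib sum_subtractf sum_divide_distrib[symmetric]
        sum_distrib_left[symmetric])
  also have "\<dots> = (grad_sq u x + inner (u x) (laplacian u x)) / (norm x)^2
      + (2 * k - 2) / (norm x)^4 * inner (re_conj_grad u x) x
      + real CARD('n) * (k * (cmod (u x))^2 / (norm x)^4)
      - 4 * k * (cmod (u x))^2 / (norm x)^6 * (norm x)^2"
    by (simp add: grad_sq_def laplacian_def re_conj_grad_def inner_vec_def inner_sum_right
        sum.distrib power2_norm_vec)
  also have "\<dots> = ?rhs"
    using assms by (simp add: field_simps eval_nat_numeral)
  finally show ?thesis .
qed

lemma rellich_identity_pointwise:
  fixes u :: "real^'n \<Rightarrow> complex" and C :: real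
  assumes du: "u differentiable at x" and C: "C = real CARD('n) * (real CARD('n) - 4) / 4"
  shows "(cmod (laplacian u x))^2
      + 2 * C * (\<Sum>i\<in>UNIV. rellich_field_partial ((real CARD('n) - 2) / 2) u i x)
     = C^2 * ((cmod (u x))^2 / norm x ^ 4)
       + (cmod (laplacian u x + of_real (C / norm x ^ 2) * u x))^2
       + 2 * C * ((1 / norm x ^ 2) *
            (norm (grad_abs u x + ((real CARD('n) - 4) / 2 * cmod (u x) / norm x ^ 2) *\<^sub>R x))^2)
       + 2 * C * ((grad_sq u x - (norm (grad_abs u x))^2) / norm x ^ 2)"
proof (cases "x = 0")
  case True
  then show ?thesis
    by (simp add: rellich_field_partial_def)
next
  case False
  define N where "N = real CARD('n)"
  define c where "c = (N - 4) / 2 * cmod (u x) / norm x ^ 2"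
  have grad_part: "(norm (grad_abs u x + c *\<^sub>R x))^2
      = (norm (grad_abs u x))^2 + (N - 4) * inner (re_conj_grad u x) x / (norm x)^2
        + c^2 * (norm x)^2"
    unfolding norm_add_power2 cmod_scaleR_grad_abs[OF du, symmetric] c_def
    by (simp add: power_mult_distrib power_divide mult.assoc)
  have laplacian_part: "(cmod (laplacian u x + of_real (C / norm x ^ 2) * u x))^2
      = (cmod (laplacian u x))^2 + 2 * (C / (norm x)^2) * inner (u x) (laplacian u x)
        + (C / (norm x)^2)^2 * (cmod (u x))^2"
    unfolding scaleR_conv_of_real[symmetric] norm_add_power2
    by (simp add: inner_commute power_mult_distrib power_divide mult.assoc)
  show ?thesis
    unfolding N_def[symmetric] c_def[symmetric] grad_part laplacian_part
      sum_rellich_field_partial[OF False]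
    unfolding c_def C N_def
    by (simp add: field_simps False) algebra
qed

locale punctured_test_function =
  fixes u :: "real^'n \<Rightarrow> complex"
  assumes test_fun_punct: "test_fun_punct u"
begin

definition tsupp :: "(real^'n) set" where
  "tsupp = closure {x. u x \<noteq> 0}"

lemma compact_tsupp: "compact tsupp"
  using test_fun_punct by (simp add: test_fun_punct_def tsupp_def)

lemma nonzero_if_in_tsupp: "x \<in> tsupp \<Longrightarrow> x \<noteq> 0"
  using test_fun_punct by (auto simp: test_fun_punct_def tsupp_def)

lemma power_norm_nonzero_on_tsupp: "\<forall>x\<in>tsupp. norm x ^ n \<noteq> 0"
  using nonzero_if_in_tsupp by simp

lemma regularity:
  shows differentiable: "u differentiable at x"
    and differentiable_pderiv: "pderiv_at u i differentiable at x"
    and continuous: "continuous_on UNIV u"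
    and continuous_pderiv: "continuous_on UNIV (pderiv_at u i)"
    and continuous_pderiv2: "continuous_on UNIV (pderiv_at (pderiv_at u i) j)"
proof -
  have "Ck 2 u"
    using test_fun_punct by (simp add: test_fun_punct_def smooth_def)
  then show "u differentiable at x" "pderiv_at u i differentiable at x" "continuous_on UNIV u"
    "continuous_on UNIV (pderiv_at u i)" "continuous_on UNIV (pderiv_at (pderiv_at u i) j)"
    by (simp_all add: numeral_2_eq_2 differentiable_on_def)
qed

lemma vanishes_outside_tsupp:
  assumes "x \<notin> tsupp"
  shows "u x = 0" and "pderiv_at u i x = 0" and "pderiv_at (pderiv_at u i) j x = 0"
    and "laplacian u x = 0" and "grad_sq u x = 0" and "grad_abs u x = 0"
proof -
  have "open (- tsupp)"
    by (auto simp: tsupp_def)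
  have u0: "u y = 0" if "y \<in> - tsupp" for y
    using that closure_subset[of "{x. u x \<noteq> 0}"] by (auto simp: tsupp_def)
  have p0: "pderiv_at u i y = 0" if "y \<in> - tsupp" for i y
    using \<open>open (- tsupp)\<close> that u0 by (rule pderiv_at_eq_0_on_open)
  have q0: "pderiv_at (pderiv_at u i) j x = 0" for i j
    using \<open>open (- tsupp)\<close> _ p0 by (rule pderiv_at_eq_0_on_open) (simp add: assms)
  show "u x = 0" "pderiv_at u i x = 0" "pderiv_at (pderiv_at u i) j x = 0"
    using assms u0 p0 q0 by simp_all
  show "laplacian u x = 0" "grad_sq u x = 0" "grad_abs u x = 0"
    using assms u0 p0 q0 by (simp_all add: laplacian_def grad_sq_def grad_abs_eq[OF differentiable])
qed

lemma continuous_on_tsupp: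
  shows "continuous_on tsupp u"
    and "continuous_on tsupp (pderiv_at u i)"
    and "continuous_on tsupp (pderiv_at (pderiv_at u i) j)"
    and "continuous_on tsupp (laplacian u)"
    and "continuous_on tsupp (grad_sq u)"
proof -
  show u: "continuous_on tsupp u"
    and p: "continuous_on tsupp (pderiv_at u i)"
    and q: "continuous_on tsupp (pderiv_at (pderiv_at u i) j)" for i j
    using continuous continuous_pderiv continuous_pderiv2 by (auto intro: continuous_on_subset)
  show "continuous_on tsupp (laplacian u)" "continuous_on tsupp (grad_sq u)"
    unfolding laplacian_def[abs_def] grad_sq_def[abs_def] by (intro continuous_intros p q)+
qed

lemma borel_measurable_derivatives [measurable]:
  shows "u \<in> borel_measurable borel"
    and "pderiv_at u i \<in> borel_measurable borel"
    and "pderiv_at (pderiv_at u i) j \<in> borel_measurable borel"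
  using continuous continuous_pderiv continuous_pderiv2
  by (auto intro: borel_measurable_continuous_onI)

lemma borel_measurable_grad_sq [measurable]: "grad_sq u \<in> borel_measurable borel"
  unfolding grad_sq_def[abs_def] by measurable

lemma borel_measurable_grad_abs [measurable]: "grad_abs u \<in> borel_measurable borel"
proof -
  have "continuous_on UNIV (re_conj_grad u)"
    unfolding re_conj_grad_def[abs_def]
    by (intro continuous_intros continuous continuous_pderiv)
  then have [measurable]: "re_conj_grad u \<in> borel_measurable borel"
    by (rule borel_measurable_continuous_onI)
  have "grad_abs u = (\<lambda>x. (1 / cmod (u x)) *\<^sub>R re_conj_grad u x)"
    using grad_abs_eq[OF differentiable] by blast
  then show ?thesis
    by simp
qed

lemma integrable_if_continuous_on_tsupp:
  fixes f :: "real^'n \<Rightarrow> real"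
  assumes "continuous_on tsupp f" "\<And>x. x \<notin> tsupp \<Longrightarrow> f x = 0"
  shows "integrable lborel f"
  using compact_tsupp assms by (rule integrable_vanishing_outside_compact)

lemma rellich_field_line_derivative:
  "((\<lambda>t. rellich_field k u (x + t *\<^sub>R axis i 1) $ i)
    has_real_derivative rellich_field_partial k u i x) (at 0)"
proof (cases "x \<in> tsupp")
  case True
  then show ?thesis
    using rellich_field_component_has_derivative nonzero_if_in_tsupp differentiable
      differentiable_pderiv by blast
next
  case False
  have "open (- tsupp)"
    by (auto simp: tsupp_def)
  then have "((\<lambda>y. rellich_field k u y $ i) has_derivative (\<lambda>_. 0)) (at x)"
    by (rule has_derivative_vanishing_on_open)
      (use False in \<open>simp_all add: rellich_field_def re_conj_grad_def vanishes_outside_tsupp\<close>)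
  moreover have "rellich_field_partial k u i x = 0"
    using False by (simp add: rellich_field_partial_def vanishes_outside_tsupp)
  ultimately show ?thesis
    using has_vector_derivative_along_line[of _ _ x "axis i 1"]
    by (simp add: has_real_derivative_iff_has_vector_derivative)
qed

lemma integral_rellich_field_partial_eq_0: "(LINT x|lborel. rellich_field_partial k u i x) = 0"
proof (rule integral_directional_derivative_eq_0[where W="\<lambda>y. rellich_field k u y $ i"
      and v="axis i 1" and S=tsupp])
  show "((\<lambda>t. rellich_field k u (x + t *\<^sub>R axis i 1) $ i) has_real_derivative
      rellich_field_partial k u i x) (at 0)" for x
    by (rule rellich_field_line_derivative)
  have "continuous_on tsupp (rellich_field_partial k u i)"
    unfolding rellich_field_partial_def[abs_def]
    by (intro continuous_intros continuous_on_tsupp power_norm_nonzero_on_tsupp)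
  then show "bounded (range (rellich_field_partial k u i))"
    by (rule bounded_range_vanishing_outside[OF compact_tsupp])
      (simp add: rellich_field_partial_def vanishes_outside_tsupp)
  show "integrable lborel (\<lambda>y. rellich_field k u y $ i)"
    by (rule integrable_if_continuous_on_tsupp)
      (auto simp: rellich_field_def re_conj_grad_def vanishes_outside_tsupp
        intro!: continuous_intros continuous_on_tsupp power_norm_nonzero_on_tsupp)
  show "rellich_field_partial k u i \<in> borel_measurable borel"
    unfolding rellich_field_partial_def[abs_def] by measurable
qed (simp_all add: rellich_field_def re_conj_grad_def vanishes_outside_tsupp
    compact_imp_bounded[OF compact_tsupp])

lemma integrable_rellich_terms:
  shows "integrable lborel (\<lambda>x. (cmod (laplacian u x))^2)"
    and "integrable lborel (\<lambda>x. (cmod (u x))^2 / norm x ^ 4)"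
    and "integrable lborel (\<lambda>x. (cmod (laplacian u x + of_real (C / norm x ^ 2) * u x))^2)"
    and "integrable lborel (rellich_field_partial k u i)"
  unfolding rellich_field_partial_def[abs_def]
  by (intro integrable_if_continuous_on_tsupp continuous_intros continuous_on_tsupp
      power_norm_nonzero_on_tsupp; simp add: vanishes_outside_tsupp)+

lemma integrable_grad_abs_terms:
  shows "integrable lborel
      (\<lambda>x. (1 / norm x ^ 2) * (norm (grad_abs u x + (c * cmod (u x) / norm x ^ 2) *\<^sub>R x))^2)"
    and "integrable lborel (\<lambda>x. (grad_sq u x - (norm (grad_abs u x))^2) / norm x ^ 2)"
proof -
  let ?a = "\<lambda>x. c * cmod (u x) / norm x ^ 2"
  show "integrable lborel (\<lambda>x. (1 / norm x ^ 2) * (norm (grad_abs u x + ?a x *\<^sub>R x))^2)"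
  proof (rule integrable_dominated_on_compact[OF _ compact_tsupp])
    show "continuous_on tsupp (\<lambda>x. (1 / norm x ^ 2) * (sqrt (grad_sq u x) + \<bar>?a x\<bar> * norm x)^2)"
      by (intro continuous_intros continuous_on_tsupp power_norm_nonzero_on_tsupp)
    show "\<bar>(1 / norm x ^ 2) * (norm (grad_abs u x + ?a x *\<^sub>R x))^2\<bar>
        \<le> (1 / norm x ^ 2) * (sqrt (grad_sq u x) + \<bar>?a x\<bar> * norm x)^2" for x
    proof -
      have "norm (grad_abs u x + ?a x *\<^sub>R x) \<le> sqrt (grad_sq u x) + \<bar>?a x\<bar> * norm x"
        using norm_triangle_ineq[of "grad_abs u x" "?a x *\<^sub>R x"]
          real_le_rsqrt[OF norm_grad_abs_le[OF differentiable[of x]]] by simp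
      then show ?thesis
        by (simp add: power_mono divide_right_mono)
    qed
  qed (simp_all add: vanishes_outside_tsupp)
  show "integrable lborel (\<lambda>x. (grad_sq u x - (norm (grad_abs u x))^2) / norm x ^ 2)"
  proof (rule integrable_dominated_on_compact[OF _ compact_tsupp])
    show "continuous_on tsupp (\<lambda>x. grad_sq u x / norm x ^ 2)"
      by (intro continuous_intros continuous_on_tsupp power_norm_nonzero_on_tsupp)
    show "\<bar>(grad_sq u x - (norm (grad_abs u x))^2) / norm x ^ 2\<bar> \<le> grad_sq u x / norm x ^ 2"
      for x
      using norm_grad_abs_le[OF differentiable, of x] by (simp add: divide_right_mono)
  qed (simp_all add: vanishes_outside_tsupp)
qed

end

theorem corollary4p4:
  fixes u :: "real^'n \<Rightarrow> complex" and C :: real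
  assumes N4: "CARD('n) \<ge> 4"
    and C_def: "C = real CARD('n) * (real CARD('n) - 4) / 4"
    and u: "test_fun_punct u"
  shows "(LINT x|lborel. (cmod (laplacian u x))^2)
       = C^2 * (LINT x|lborel. (cmod (u x))^2 / norm x ^ 4)
       + (LINT x|lborel. (cmod (laplacian u x + of_real (C / norm x ^ 2) * u x))^2)
       + 2 * C * (LINT x|lborel. (1 / norm x ^ 2) *
            (norm (grad_abs u x + ((real CARD('n) - 4) / 2 * cmod (u x) / norm x ^ 2) *\<^sub>R x))^2)
       + 2 * C * (LINT x|lborel. (grad_sq u x - (norm (grad_abs u x))^2) / norm x ^ 2)"
proof -
  interpret punctured_test_function u
    using u by unfold_locales
  let ?div = "\<lambda>x. 2 * C * (\<Sum>i\<in>UNIV. rellich_field_partial ((real CARD('n) - 2) / 2) u i x)"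
  have "integrable lborel ?div"
    using integrable_rellich_terms by simp
  moreover have "(LINT x|lborel. ?div x) = 0"
    using integrable_rellich_terms
    by (simp add: Bochner_Integration.integral_sum integral_rellich_field_partial_eq_0)
  ultimately show ?thesis
    using rellich_identity_pointwise[OF differentiable C_def] integrable_rellich_terms
      integrable_grad_abs_terms
    by (intro integral_eq_of_pointwise_eq[where g="?div"])
qed

end
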